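(* $\mathrm{Ldim}(\mathcal N)=\infty$: for every $m\in\mathbb N$ there is a complete binary tree of depth $m$ shattered by $\mathcal N$.
   Context: $\mathcal N$ is the set of functions $f:[-1,1]\to\mathbb R$ of the form $f(x)=a_1\mathrm{ReLU}(w_1x+b_1)+a_2\mathrm{ReLU}(w_2x+b_2)+b$ with $w_1,w_2,b_1,b_2,a_1,a_2,b\in[-1,1]$, where $\mathrm{ReLU}(z)=\max\{0,z\}$. A complete binary tree of depth $m$ has internal nodes $v$ labeled by $x_v\in[-1,1]$, and the two edges leaving each internal node are labeled by two distinct real numbers; it is shattered by $\mathcal N$ if for every root-to-leaf path there exists $f\in\mathcal N$ with $f(x_v)$ equal to the label of the path's outgoing edge at $v$ for every node $v$ on the path. $\mathrm{Ldim}(\mathcal N)$ (the Littlestone dimension under $0/1$ loss) is the supremum of depths of shattered trees. *)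

theory Defs
  imports "HOL-Library.Extended_Nat" Complex_Main
begin

definition relu :: "real \<Rightarrow> real" where
  "relu z = max 0 z"

text \<open>The class N of two-neuron ReLU networks with all parameters in [-1,1].
  Functions are represented as real => real; only their values on [-1,1] matter,
  since all node labels lie in [-1,1].\<close>
definition NN :: "(real \<Rightarrow> real) set" where
  "NN = {f. \<exists>w1 w2 b1 b2 a1 a2 b.
      w1 \<in> {-1..1} \<and> w2 \<in> {-1..1} \<and> b1 \<in> {-1..1} \<and> b2 \<in> {-1..1} \<and>
      a1 \<in> {-1..1} \<and> a2 \<in> {-1..1} \<and> b \<in> {-1..1} \<and>
      f = (\<lambda>x. a1 * relu (w1 * x + b1) + a2 * relu (w2 * x + b2) + b)}"

text \<open>A complete binary tree of depth m: internal nodes are bit strings v with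
  length v < m (the root is []); node v is labelled by X v, and the edge leaving v
  in direction d is labelled by Y v d. A root-to-leaf path is a bit string p with
  length p = m; its i-th node is take i p and the outgoing edge there is p ! i.\<close>
definition shattered_tree ::
  "(real \<Rightarrow> real) set \<Rightarrow> nat \<Rightarrow> (bool list \<Rightarrow> real) \<Rightarrow> (bool list \<Rightarrow> bool \<Rightarrow> real) \<Rightarrow> bool" where
  "shattered_tree H m X Y \<longleftrightarrow>
     (\<forall>v. length v < m \<longrightarrow> X v \<in> {-1..1} \<and> Y v True \<noteq> Y v False) \<and>
     (\<forall>p. length p = m \<longrightarrow>
        (\<exists>f\<in>H. \<forall>i<m. f (X (take i p)) = Y (take i p) (p ! i)))"

definition ldim :: "(real \<Rightarrow> real) set \<Rightarrow> enat" where
  "ldim H = Sup {enat m | m. \<exists>X Y. shattered_tree H m X Y}"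

end

theory Submission
  imports Defs
begin

text \<open>Node v of the tree is labelled by the midpoint of the dyadic interval
  of [0,1] addressed by the bit string v, so that a root-to-leaf path p walks down to a leaf
  interval [L,R] of length 2^-m, lying to the right of every node where p branches True and
  to the left of every node where it branches False. The clipped ramp
  relu (x - L) - relu (x - R), a network in N, is 0 left of L and 2^-m right of R, so it
  realizes the edge labels 0 (True) and 2^-m (False) along p.\<close>

fun bin_value :: "bool list \<Rightarrow> nat" where
  "bin_value [] = 0"
| "bin_value (b # bs) = (if b then 2 ^ length bs else 0) + bin_value bs"

lemma bin_value_append: "bin_value (xs @ ys) = bin_value xs * 2 ^ length ys + bin_value ys"
  by (induction xs) (auto simp: algebra_simps power_add)

lemma bin_value_less: "bin_value xs < 2 ^ length xs"
  by (induction xs) (auto simp: algebra_simps)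

lemma bin_value_branch_iff:
  "(2 * bin_value v + 1) * 2 ^ length d \<le> bin_value (v @ b # d) \<longleftrightarrow> b"
proof -
  have "bin_value (v @ b # d) = 2 * bin_value v * 2 ^ length d + (if b then 2 ^ length d else 0)
          + bin_value d"
    by (simp add: bin_value_append)
  with bin_value_less[of d] show ?thesis
    by (simp add: algebra_simps)
qed

definition dyadic_mid :: "bool list \<Rightarrow> real" where
  "dyadic_mid v = (2 * bin_value v + 1) / 2 ^ Suc (length v)"

lemma dyadic_mid_bounds: "0 < dyadic_mid v \<and> dyadic_mid v < 1"
proof -
  have "2 * bin_value v + 1 < (2::nat) ^ Suc (length v)"
    using bin_value_less[of v] by simp
  then have "real (2 * bin_value v + 1) < 2 ^ Suc (length v)"
    by (simp only: of_nat_less_numeral_power_cancel_iff)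
  then show ?thesis
    by (simp add: dyadic_mid_def)
qed

lemma dyadic_mid_vs_leaf:
  fixes v d :: "bool list" and b :: bool
  defines "p \<equiv> v @ b # d"
  shows "b \<Longrightarrow> dyadic_mid v \<le> bin_value p / 2 ^ length p"
    and "\<not> b \<Longrightarrow> (bin_value p + 1) / 2 ^ length p \<le> dyadic_mid v"
proof -
  define c where "c = (2 * bin_value v + 1) * 2 ^ length d"
  have mid: "dyadic_mid v = real c / 2 ^ length p"
    unfolding p_def c_def dyadic_mid_def by (simp add: power_add field_simps)
  have branch: "b \<longleftrightarrow> c \<le> bin_value p"
    unfolding p_def c_def by (rule bin_value_branch_iff[symmetric])
  show "b \<Longrightarrow> dyadic_mid v \<le> bin_value p / 2 ^ length p"
    using branch unfolding mid by (simp add: divide_right_mono)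
  show "\<not> b \<Longrightarrow> (bin_value p + 1) / 2 ^ length p \<le> dyadic_mid v"
    using branch unfolding mid by (simp add: divide_right_mono)
qed

definition ramp :: "real \<Rightarrow> real \<Rightarrow> real \<Rightarrow> real" where
  "ramp L R x = relu (x - L) - relu (x - R)"

lemma ramp_in_NN:
  assumes "L \<in> {-1..1}" "R \<in> {-1..1}"
  shows "ramp L R \<in> NN"
proof -
  have "ramp L R = (\<lambda>x. 1 * relu (1 * x + - L) + (- 1) * relu (1 * x + - R) + 0)"
    by (auto simp: ramp_def)
  moreover have "- L \<in> {-1..1}" "- R \<in> {-1..1}" "(1::real) \<in> {-1..1}" "(- 1::real) \<in> {-1..1}"
    "(0::real) \<in> {-1..1}"
    using assms by auto
  ultimately show ?thesis
    unfolding NN_def by blast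
qed

lemma ramp_left: "x \<le> L \<Longrightarrow> L \<le> R \<Longrightarrow> ramp L R x = 0"
  by (simp add: ramp_def relu_def)

lemma ramp_right: "R \<le> x \<Longrightarrow> L \<le> R \<Longrightarrow> ramp L R x = R - L"
  by (simp add: ramp_def relu_def)

lemma shattered_tree_NN_dyadic_mid:
  "shattered_tree NN m dyadic_mid (\<lambda>v b. if b then 0 else 1 / 2 ^ m)"
  unfolding shattered_tree_def
proof (intro conjI allI impI)
  fix v :: "bool list"
  show "dyadic_mid v \<in> {-1..1}"
    using dyadic_mid_bounds[of v] by simp
  show "(if True then 0 else 1 / 2 ^ m) \<noteq> (if False then 0 else 1 / (2::real) ^ m)"
    by simp
next
  fix p :: "bool list"
  assume p: "length p = m"
  define L where "L = real (bin_value p) / 2 ^ m"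
  define R where "R = real (bin_value p + 1) / 2 ^ m"
  have "bin_value p + 1 \<le> (2::nat) ^ m"
    using bin_value_less[of p] p by simp
  then have "real (bin_value p + 1) \<le> 2 ^ m"
    by (simp only: of_nat_le_numeral_power_cancel_iff)
  then have LR: "0 \<le> L" "L \<le> R" "R \<le> 1"
    by (simp_all add: L_def R_def divide_right_mono)
  have "R - L = 1 / 2 ^ m"
    by (simp add: L_def R_def diff_divide_distrib[symmetric])
  have "ramp L R (dyadic_mid (take i p)) = (if p ! i then 0 else 1 / 2 ^ m)" if "i < m" for i
  proof -
    have split: "p = take i p @ p ! i # drop (Suc i) p"
      using that p by (simp add: id_take_nth_drop)
    note leaf = dyadic_mid_vs_leaf[of "p ! i" "take i p" "drop (Suc i) p", folded split,
        unfolded p, folded L_def R_def]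
    show ?thesis
    proof (cases "p ! i")
      case True
      then show ?thesis using leaf(1) LR by (simp add: ramp_left)
    next
      case False
      then show ?thesis using leaf(2) LR \<open>R - L = 1 / 2 ^ m\<close> by (simp add: ramp_right)
    qed
  qed
  moreover have "ramp L R \<in> NN"
    using LR by (intro ramp_in_NN) auto
  ultimately show "\<exists>f\<in>NN. \<forall>i<m. f (dyadic_mid (take i p)) = (if p ! i then 0 else 1 / 2 ^ m)"
    by blast
qed

lemma ldim_eq_infinity_if_shattered_trees_of_all_depths:
  assumes "\<And>m. \<exists>X Y. shattered_tree H m X Y"
  shows "ldim H = \<infinity>"
proof -
  have "{enat m | m. \<exists>X Y. shattered_tree H m X Y} = range enat"
    using assms by auto
  moreover have "infinite (range enat)"
    by (simp add: finite_image_iff inj_on_def)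
  ultimately show ?thesis
    by (simp add: ldim_def Sup_enat_def)
qed

theorem theoremE1:
  shows "ldim NN = \<infinity> \<and> (\<forall>m::nat. \<exists>X Y. shattered_tree NN m X Y)"
  using shattered_tree_NN_dyadic_mid ldim_eq_infinity_if_shattered_trees_of_all_depths by blast

end
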